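(* Let $X$ be a space with base point $*$ and $C$ a locally trivial $X$-groupoid with $\Omega_C=C_*^*$. Then $C$ is Hausdorff if and only if $X$ and $\Omega_C$ are Hausdorff.
   Context: $X$-groupoid: a space $C$ with continuous source/target $\alpha,\beta:C\to X$, continuous associative partial composition on $\{(c_1,c_2):\alpha(c_1)=\beta(c_2)\}$ with $\alpha(c_1c_2)=\alpha(c_2)$, $\beta(c_1c_2)=\beta(c_1)$, continuous units $i_x$ and continuous inversion $C_x^y\to C_y^x$, where $C_x=\alpha^{-1}(x)$, $C^y=\beta^{-1}(y)$, $C^y_x=C_x\cap C^y$. A $C$-contraction is a continuous $\rho:U_\rho\to C^*$, $U_\rho\subset X$ open, with $\alpha(\rho(x))=x$; $C$ is locally trivial if the $U_\rho$ cover $X$. *)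

theory Defs
  imports "HOL-Analysis.Analysis"
begin

definition X_groupoid ::
  "'x topology \<Rightarrow> 'c topology \<Rightarrow> ('c \<Rightarrow> 'x) \<Rightarrow> ('c \<Rightarrow> 'x)
   \<Rightarrow> ('c \<Rightarrow> 'c \<Rightarrow> 'c) \<Rightarrow> ('x \<Rightarrow> 'c) \<Rightarrow> ('c \<Rightarrow> 'c) \<Rightarrow> bool" where
  "X_groupoid X C \<alpha> \<beta> cmp i ginv \<longleftrightarrow>
     continuous_map C X \<alpha> \<and> continuous_map C X \<beta> \<and>
     continuous_map
       (subtopology (prod_topology C C)
          {(c1, c2). c1 \<in> topspace C \<and> c2 \<in> topspace C \<and> \<alpha> c1 = \<beta> c2})
       C (\<lambda>(c1, c2). cmp c1 c2) \<and>
     (\<forall>c1\<in>topspace C. \<forall>c2\<in>topspace C. \<alpha> c1 = \<beta> c2 \<longrightarrow>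
        \<alpha> (cmp c1 c2) = \<alpha> c2 \<and> \<beta> (cmp c1 c2) = \<beta> c1) \<and>
     (\<forall>c1\<in>topspace C. \<forall>c2\<in>topspace C. \<forall>c3\<in>topspace C.
        \<alpha> c1 = \<beta> c2 \<and> \<alpha> c2 = \<beta> c3 \<longrightarrow>
        cmp (cmp c1 c2) c3 = cmp c1 (cmp c2 c3)) \<and>
     continuous_map X C i \<and>
     (\<forall>x\<in>topspace X. \<alpha> (i x) = x \<and> \<beta> (i x) = x) \<and>
     (\<forall>c\<in>topspace C. cmp c (i (\<alpha> c)) = c \<and> cmp (i (\<beta> c)) c = c) \<and>
     continuous_map C C ginv \<and>
     (\<forall>c\<in>topspace C. \<alpha> (ginv c) = \<beta> c \<and> \<beta> (ginv c) = \<alpha> c \<and>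
        cmp c (ginv c) = i (\<beta> c) \<and> cmp (ginv c) c = i (\<alpha> c))"

definition C_contraction ::
  "'x topology \<Rightarrow> 'c topology \<Rightarrow> ('c \<Rightarrow> 'x) \<Rightarrow> ('c \<Rightarrow> 'x) \<Rightarrow> 'x
   \<Rightarrow> 'x set \<Rightarrow> ('x \<Rightarrow> 'c) \<Rightarrow> bool" where
  "C_contraction X C \<alpha> \<beta> base U \<rho> \<longleftrightarrow>
     openin X U \<and>
     continuous_map (subtopology X U)
       (subtopology C {c \<in> topspace C. \<beta> c = base}) \<rho> \<and>
     (\<forall>x\<in>U. \<alpha> (\<rho> x) = x)"

definition locally_trivial ::
  "'x topology \<Rightarrow> 'c topology \<Rightarrow> ('c \<Rightarrow> 'x) \<Rightarrow> ('c \<Rightarrow> 'x) \<Rightarrow> 'x \<Rightarrow> bool" where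
  "locally_trivial X C \<alpha> \<beta> base \<longleftrightarrow>
     (\<forall>x\<in>topspace X. \<exists>U \<rho>. C_contraction X C \<alpha> \<beta> base U \<rho> \<and> x \<in> U)"

definition vertex_space ::
  "'c topology \<Rightarrow> ('c \<Rightarrow> 'x) \<Rightarrow> ('c \<Rightarrow> 'x) \<Rightarrow> 'x \<Rightarrow> 'c topology" where
  "vertex_space C \<alpha> \<beta> base =
     subtopology C {c \<in> topspace C. \<alpha> c = base \<and> \<beta> c = base}"

end

theory Submission
  imports Defs
begin

text \<open>Points of \<open>C\<close> with different source or different target are separated by preimages
under \<open>\<alpha>\<close> or \<open>\<beta>\<close>. Two points \<open>c \<noteq> d\<close> of the same fibre \<open>C\<^sub>x\<^sup>y\<close> are moved into the vertex
group by \<open>c \<mapsto> \<sigma>(y) c \<rho>(x)\<inverse>\<close>, where \<open>\<rho>\<close>, \<open>\<sigma>\<close> are contractions defined near \<open>x\<close> and \<open>y\<close>;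
this map is continuous on an open neighbourhood of the fibre and injective on the fibre
by cancellation, so disjoint neighbourhoods of the images in \<open>\<Omega>\<^sub>C\<close> pull back to
separating neighbourhoods of \<open>c\<close> and \<open>d\<close>. Conversely \<open>\<Omega>\<^sub>C\<close> is a subspace of \<open>C\<close> and the
unit map embeds \<open>X\<close> injectively into \<open>C\<close>.\<close>

lemma separation_by_continuous_map_on_open:
  assumes W: "openin X W" and f: "continuous_map (subtopology X W) Y f"
    and Y: "Hausdorff_space Y"
    and x: "x \<in> W" and y: "y \<in> W" and fxy: "f x \<noteq> f y"
  shows "\<exists>U V. openin X U \<and> openin X V \<and> x \<in> U \<and> y \<in> V \<and> disjnt U V"
proof -
  have topW: "topspace (subtopology X W) = W"
    using W openin_subset by (auto simp: topspace_subtopology)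
  have "f x \<in> topspace Y" "f y \<in> topspace Y"
    using x y topW continuous_map_image_subset_topspace[OF f] by auto
  then obtain A B where AB: "openin Y A" "openin Y B" "f x \<in> A" "f y \<in> B" "disjnt A B"
    using Y fxy unfolding Hausdorff_space_def by blast
  let ?U = "{z \<in> topspace (subtopology X W). f z \<in> A}"
  let ?V = "{z \<in> topspace (subtopology X W). f z \<in> B}"
  have "openin X ?U" "openin X ?V"
    using openin_trans_full[OF openin_continuous_map_preimage[OF f] W] AB by blast+
  moreover have "x \<in> ?U" "y \<in> ?V" "disjnt ?U ?V"
    using AB x y topW by (auto simp: disjnt_def)
  ultimately show ?thesis by blast
qed

lemma separation_by_continuous_map:
  "\<lbrakk>continuous_map X Y f; Hausdorff_space Y; x \<in> topspace X; y \<in> topspace X; f x \<noteq> f y\<rbrakk>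
    \<Longrightarrow> \<exists>U V. openin X U \<and> openin X V \<and> x \<in> U \<and> y \<in> V \<and> disjnt U V"
  using separation_by_continuous_map_on_open[of X "topspace X"] by simp

lemma C_contractionD:
  assumes "C_contraction X C \<alpha> \<beta> base U \<rho>" and "x \<in> U"
  shows "\<rho> x \<in> topspace C" "\<beta> (\<rho> x) = base" "\<alpha> (\<rho> x) = x"
proof -
  have "continuous_map (subtopology X U) (subtopology C {c \<in> topspace C. \<beta> c = base}) \<rho>"
    "openin X U"
    using assms(1) unfolding C_contraction_def by blast+
  with assms(2) show "\<rho> x \<in> topspace C" "\<beta> (\<rho> x) = base"
    by (auto dest!: continuous_map_image_subset_topspace openin_subset simp: image_subset_iff)
  show "\<alpha> (\<rho> x) = x"
    using assms unfolding C_contraction_def by blast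
qed

lemma continuous_map_C_contraction:
  "C_contraction X C \<alpha> \<beta> base U \<rho> \<Longrightarrow> continuous_map (subtopology X U) C \<rho>"
  unfolding C_contraction_def using continuous_map_into_fulltopology by blast

locale groupoid_over =
  fixes X :: "'x topology" and C :: "'c topology"
    and \<alpha> \<beta> :: "'c \<Rightarrow> 'x" and cmp :: "'c \<Rightarrow> 'c \<Rightarrow> 'c"
    and i :: "'x \<Rightarrow> 'c" and ginv :: "'c \<Rightarrow> 'c"
  assumes groupoid: "X_groupoid X C \<alpha> \<beta> cmp i ginv"
begin

lemma continuous_map_source: "continuous_map C X \<alpha>"
  and continuous_map_target: "continuous_map C X \<beta>"
  and continuous_map_unit: "continuous_map X C i"
  and continuous_map_ginv: "continuous_map C C ginv"
  using groupoid unfolding X_groupoid_def by blast+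

lemma continuous_map_cmp:
  assumes f: "continuous_map Z C f" and g: "continuous_map Z C g"
    and fg: "\<And>z. z \<in> topspace Z \<Longrightarrow> \<alpha> (f z) = \<beta> (g z)"
  shows "continuous_map Z C (\<lambda>z. cmp (f z) (g z))"
proof -
  let ?P = "{(c1, c2). c1 \<in> topspace C \<and> c2 \<in> topspace C \<and> \<alpha> c1 = \<beta> c2}"
  have m: "continuous_map (subtopology (prod_topology C C) ?P) C (\<lambda>(c1, c2). cmp c1 c2)"
    using groupoid unfolding X_groupoid_def by blast
  have "continuous_map Z (subtopology (prod_topology C C) ?P) (\<lambda>z. (f z, g z))"
    using f g fg continuous_map_image_subset_topspace[OF f] continuous_map_image_subset_topspace[OF g]
    by (auto simp: continuous_map_in_subtopology intro!: continuous_map_pairedI)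
  from continuous_map_compose[OF this m] show ?thesis
    by (simp add: o_def)
qed

lemma cmp_in_topspace:
  assumes "c1 \<in> topspace C" "c2 \<in> topspace C" "\<alpha> c1 = \<beta> c2"
  shows "cmp c1 c2 \<in> topspace C"
proof -
  have "continuous_map (subtopology (prod_topology C C)
      {(c1, c2). c1 \<in> topspace C \<and> c2 \<in> topspace C \<and> \<alpha> c1 = \<beta> c2}) C (\<lambda>(c1, c2). cmp c1 c2)"
    using groupoid unfolding X_groupoid_def by blast
  from continuous_map_image_subset_topspace[OF this] assms show ?thesis
    by auto
qed

lemma source_cmp: "\<lbrakk>c1 \<in> topspace C; c2 \<in> topspace C; \<alpha> c1 = \<beta> c2\<rbrakk> \<Longrightarrow> \<alpha> (cmp c1 c2) = \<alpha> c2"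
  and target_cmp: "\<lbrakk>c1 \<in> topspace C; c2 \<in> topspace C; \<alpha> c1 = \<beta> c2\<rbrakk> \<Longrightarrow> \<beta> (cmp c1 c2) = \<beta> c1"
  using groupoid unfolding X_groupoid_def by blast+

lemma cmp_assoc:
  "\<lbrakk>c1 \<in> topspace C; c2 \<in> topspace C; c3 \<in> topspace C; \<alpha> c1 = \<beta> c2; \<alpha> c2 = \<beta> c3\<rbrakk>
    \<Longrightarrow> cmp (cmp c1 c2) c3 = cmp c1 (cmp c2 c3)"
  using groupoid unfolding X_groupoid_def by blast

lemma source_unit: "x \<in> topspace X \<Longrightarrow> \<alpha> (i x) = x"
  using groupoid unfolding X_groupoid_def by blast

lemma cmp_unit_right: "c \<in> topspace C \<Longrightarrow> cmp c (i (\<alpha> c)) = c"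
  and cmp_unit_left: "c \<in> topspace C \<Longrightarrow> cmp (i (\<beta> c)) c = c"
  using groupoid unfolding X_groupoid_def by blast+

lemma ginv_in_topspace: "c \<in> topspace C \<Longrightarrow> ginv c \<in> topspace C"
  using continuous_map_image_subset_topspace[OF continuous_map_ginv] by blast

lemma source_ginv: "c \<in> topspace C \<Longrightarrow> \<alpha> (ginv c) = \<beta> c"
  and target_ginv: "c \<in> topspace C \<Longrightarrow> \<beta> (ginv c) = \<alpha> c"
  and cmp_ginv_right: "c \<in> topspace C \<Longrightarrow> cmp c (ginv c) = i (\<beta> c)"
  and cmp_ginv_left: "c \<in> topspace C \<Longrightarrow> cmp (ginv c) c = i (\<alpha> c)"
  using groupoid unfolding X_groupoid_def by blast+

lemma cmp_ginv_cmp: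
  assumes a: "a \<in> topspace C" and c: "c \<in> topspace C" and ac: "\<alpha> a = \<beta> c"
  shows "cmp (ginv a) (cmp a c) = c"
proof -
  have "cmp (ginv a) (cmp a c) = cmp (cmp (ginv a) a) c"
    using a c ac by (simp add: cmp_assoc ginv_in_topspace source_ginv)
  also have "\<dots> = c"
    using a c ac by (simp add: cmp_ginv_left cmp_unit_left)
  finally show ?thesis .
qed

lemma cmp_cmp_ginv:
  assumes a: "a \<in> topspace C" and c: "c \<in> topspace C" and ca: "\<alpha> c = \<beta> a"
  shows "cmp (cmp c a) (ginv a) = c"
proof -
  have "cmp (cmp c a) (ginv a) = cmp c (cmp a (ginv a))"
    using a c ca by (simp add: cmp_assoc ginv_in_topspace target_ginv)
  also have "\<dots> = c"
    using a c ca cmp_unit_right[OF c] by (simp add: cmp_ginv_right)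
  finally show ?thesis .
qed

lemma cmp_left_cancel:
  "\<lbrakk>a \<in> topspace C; c \<in> topspace C; d \<in> topspace C; \<alpha> a = \<beta> c; \<alpha> a = \<beta> d;
    cmp a c = cmp a d\<rbrakk> \<Longrightarrow> c = d"
  by (metis cmp_ginv_cmp)

lemma cmp_right_cancel:
  "\<lbrakk>a \<in> topspace C; c \<in> topspace C; d \<in> topspace C; \<alpha> c = \<beta> a; \<alpha> d = \<beta> a;
    cmp c a = cmp d a\<rbrakk> \<Longrightarrow> c = d"
  by (metis cmp_cmp_ginv)

definition vertex_chart :: "('x \<Rightarrow> 'c) \<Rightarrow> ('x \<Rightarrow> 'c) \<Rightarrow> 'c \<Rightarrow> 'c" where
  "vertex_chart \<rho> \<sigma> c = cmp (\<sigma> (\<beta> c)) (cmp c (ginv (\<rho> (\<alpha> c))))"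

context
  fixes base U V \<rho> \<sigma>
  assumes \<rho>: "C_contraction X C \<alpha> \<beta> base U \<rho>" and \<sigma>: "C_contraction X C \<alpha> \<beta> base V \<sigma>"
begin

lemma cmp_ginv_contraction:
  assumes "c \<in> topspace C" "\<alpha> c \<in> U"
  shows "cmp c (ginv (\<rho> (\<alpha> c))) \<in> topspace C"
    "\<alpha> (cmp c (ginv (\<rho> (\<alpha> c)))) = base" "\<beta> (cmp c (ginv (\<rho> (\<alpha> c)))) = \<beta> c"
  using assms C_contractionD[OF \<rho>]
  by (simp_all add: cmp_in_topspace source_cmp target_cmp ginv_in_topspace source_ginv target_ginv)

lemma vertex_chart_in_vertex_space:
  assumes "c \<in> topspace C" "\<alpha> c \<in> U" "\<beta> c \<in> V"
  shows "vertex_chart \<rho> \<sigma> c \<in> topspace (vertex_space C \<alpha> \<beta> base)"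
  using assms cmp_ginv_contraction C_contractionD[OF \<sigma>]
  by (simp add: vertex_chart_def vertex_space_def cmp_in_topspace source_cmp target_cmp)

lemma continuous_map_vertex_chart:
  "continuous_map (subtopology C {c \<in> topspace C. \<alpha> c \<in> U \<and> \<beta> c \<in> V})
     (vertex_space C \<alpha> \<beta> base) (vertex_chart \<rho> \<sigma>)"
proof -
  let ?W = "{c \<in> topspace C. \<alpha> c \<in> U \<and> \<beta> c \<in> V}"
  have topW: "topspace (subtopology C ?W) = ?W"
    by (auto simp: topspace_subtopology)
  have aW: "continuous_map (subtopology C ?W) (subtopology X U) \<alpha>"
    and bW: "continuous_map (subtopology C ?W) (subtopology X V) \<beta>"
    using topW continuous_map_source continuous_map_target
    by (auto simp: continuous_map_in_subtopology intro: continuous_map_from_subtopology)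
  have r: "continuous_map (subtopology C ?W) C (\<lambda>c. ginv (\<rho> (\<alpha> c)))"
    using continuous_map_compose[OF continuous_map_compose[OF aW continuous_map_C_contraction[OF \<rho>]]
        continuous_map_ginv]
    by (simp add: o_def)
  have s: "continuous_map (subtopology C ?W) C (\<lambda>c. \<sigma> (\<beta> c))"
    using continuous_map_compose[OF bW continuous_map_C_contraction[OF \<sigma>]] by (simp add: o_def)
  have "continuous_map (subtopology C ?W) C (\<lambda>c. cmp c (ginv (\<rho> (\<alpha> c))))"
    using topW C_contractionD[OF \<rho>]
    by (intro continuous_map_cmp[OF continuous_map_from_subtopology[OF continuous_map_id[unfolded id_def]] r])
      (simp add: target_ginv)
  then have "continuous_map (subtopology C ?W) C (vertex_chart \<rho> \<sigma>)"
    unfolding vertex_chart_def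
    using topW C_contractionD[OF \<sigma>] cmp_ginv_contraction
    by (intro continuous_map_cmp[OF s]) auto
  then show ?thesis
    using topW vertex_chart_in_vertex_space
    by (auto simp: continuous_map_in_subtopology vertex_space_def)
qed

lemma vertex_chart_inj_on_fibre:
  assumes c: "c \<in> topspace C" "\<alpha> c \<in> U" "\<beta> c \<in> V" and d: "d \<in> topspace C"
    and same_source: "\<alpha> d = \<alpha> c" and same_target: "\<beta> d = \<beta> c"
    and eq: "vertex_chart \<rho> \<sigma> c = vertex_chart \<rho> \<sigma> d"
  shows "c = d"
proof -
  let ?r = "ginv (\<rho> (\<alpha> c))" and ?s = "\<sigma> (\<beta> c)"
  have d': "\<alpha> d \<in> U"
    using c same_source by simp
  have s: "?s \<in> topspace C" "\<alpha> ?s = \<beta> c"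
    using C_contractionD[OF \<sigma> c(3)] by simp_all
  have r: "?r \<in> topspace C" "\<beta> ?r = \<alpha> c"
    using C_contractionD[OF \<rho> c(2)] by (simp_all add: ginv_in_topspace target_ginv)
  have cr: "cmp c ?r \<in> topspace C" "\<beta> (cmp c ?r) = \<beta> c"
    using cmp_ginv_contraction[OF c(1,2)] by simp_all
  have dr: "cmp d ?r \<in> topspace C" "\<beta> (cmp d ?r) = \<beta> c"
    using cmp_ginv_contraction[OF d d'] unfolding same_source same_target by simp_all
  have "cmp ?s (cmp c ?r) = cmp ?s (cmp d ?r)"
    using eq unfolding vertex_chart_def same_source same_target .
  then have "cmp c ?r = cmp d ?r"
    using cmp_left_cancel[OF s(1) cr(1) dr(1)] s(2) cr(2) dr(2) by metis
  then show "c = d"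
    using cmp_right_cancel[OF r(1) c(1) d] r(2) same_source by metis
qed

end

lemma separation_in_fibre:
  assumes trivial: "locally_trivial X C \<alpha> \<beta> base"
    and Omega: "Hausdorff_space (vertex_space C \<alpha> \<beta> base)"
    and c: "c \<in> topspace C" and d: "d \<in> topspace C" and "c \<noteq> d"
    and same_source: "\<alpha> c = \<alpha> d" and same_target: "\<beta> c = \<beta> d"
  shows "\<exists>U V. openin C U \<and> openin C V \<and> c \<in> U \<and> d \<in> V \<and> disjnt U V"
proof -
  have "\<alpha> c \<in> topspace X" "\<beta> c \<in> topspace X"
    using c continuous_map_source continuous_map_target by (auto dest: continuous_map_image_subset_topspace)
  then obtain U \<rho> V \<sigma> where \<rho>: "C_contraction X C \<alpha> \<beta> base U \<rho>" "\<alpha> c \<in> U"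
    and \<sigma>: "C_contraction X C \<alpha> \<beta> base V \<sigma>" "\<beta> c \<in> V"
    using trivial unfolding locally_trivial_def by meson
  let ?W = "{e \<in> topspace C. \<alpha> e \<in> U \<and> \<beta> e \<in> V}"
  have "openin C ?W"
  proof -
    have "openin C ({e \<in> topspace C. \<alpha> e \<in> U} \<inter> {e \<in> topspace C. \<beta> e \<in> V})"
      using \<rho>(1) \<sigma>(1) unfolding C_contraction_def
      by (intro openin_Int openin_continuous_map_preimage[OF continuous_map_source]
          openin_continuous_map_preimage[OF continuous_map_target]) auto
    moreover have "{e \<in> topspace C. \<alpha> e \<in> U} \<inter> {e \<in> topspace C. \<beta> e \<in> V} = ?W"
      by blast
    ultimately show ?thesis by simp
  qed
  moreover have "vertex_chart \<rho> \<sigma> c \<noteq> vertex_chart \<rho> \<sigma> d"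
    using vertex_chart_inj_on_fibre[OF \<rho>(1) \<sigma>(1) c \<rho>(2) \<sigma>(2) d] assms by metis
  ultimately show ?thesis
    using separation_by_continuous_map_on_open[OF _ continuous_map_vertex_chart[OF \<rho>(1) \<sigma>(1)] Omega]
      c d \<rho> \<sigma> same_source same_target by simp
qed

theorem Hausdorff_space_iff_base_and_vertex_space:
  assumes "locally_trivial X C \<alpha> \<beta> base"
  shows "Hausdorff_space C \<longleftrightarrow> Hausdorff_space X \<and> Hausdorff_space (vertex_space C \<alpha> \<beta> base)"
proof (intro iffI; (elim conjE)?)
  assume C: "Hausdorff_space C"
  have "inj_on i (topspace X)"
    by (metis inj_onI source_unit)
  then show "Hausdorff_space X \<and> Hausdorff_space (vertex_space C \<alpha> \<beta> base)"
    using Hausdorff_space_injective_preimage[OF C continuous_map_unit]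
      Hausdorff_space_subtopology[OF C] by (simp add: vertex_space_def)
next
  assume X: "Hausdorff_space X" and Omega: "Hausdorff_space (vertex_space C \<alpha> \<beta> base)"
  show "Hausdorff_space C"
    unfolding Hausdorff_space_def
  proof (intro allI impI)
    fix c d assume cd: "c \<in> topspace C \<and> d \<in> topspace C \<and> c \<noteq> d"
    show "\<exists>U V. openin C U \<and> openin C V \<and> c \<in> U \<and> d \<in> V \<and> disjnt U V"
    proof (cases "\<alpha> c = \<alpha> d \<and> \<beta> c = \<beta> d")
      case True
      then show ?thesis
        using separation_in_fibre[OF assms Omega] cd by blast
    next
      case False
      then show ?thesis
        using separation_by_continuous_map[OF continuous_map_source X]
          separation_by_continuous_map[OF continuous_map_target X] cd by blast
    qed
  qed
qed

end

theorem mainTheorem20: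
  fixes X :: "'x topology" and C :: "'c topology"
    and \<alpha> \<beta> :: "'c \<Rightarrow> 'x" and cmp :: "'c \<Rightarrow> 'c \<Rightarrow> 'c"
    and i :: "'x \<Rightarrow> 'c" and ginv :: "'c \<Rightarrow> 'c" and base :: 'x
  assumes "base \<in> topspace X"
    and "X_groupoid X C \<alpha> \<beta> cmp i ginv"
    and "locally_trivial X C \<alpha> \<beta> base"
  shows "Hausdorff_space C \<longleftrightarrow>
           Hausdorff_space X \<and> Hausdorff_space (vertex_space C \<alpha> \<beta> base)"
proof -
  interpret groupoid_over X C \<alpha> \<beta> cmp i ginv
    using assms(2) by unfold_locales
  show ?thesis
    using Hausdorff_space_iff_base_and_vertex_space[OF assms(3)] .
qed

end
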